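(* Let $\mu\in\mathbb{R}^J$ and let $\Lambda\in\mathbb{R}^{J\times J}$ be a symmetric positive semidefinite matrix satisfying (i) $2\sum_{s=1}^J\Lambda_{rs}\ge\Lambda_{rr}$ for all $r\in[J]$, and (ii) $\Lambda_{rs}\le 0$ for all $r,s\in[J]$ with $r\ne s$. Then the function $g:\{0,1\}^J\to\mathbb{R}$, $g(y)=\mu^{\top}y+\sqrt{y^{\top}\Lambda y}$, is submodular.
   Context: $[J]=\{1,\dots,J\}$. A vector $y\in\{0,1\}^J$ is identified with the subset $R=\{j: y_j=1\}\subseteq[J]$. A set function $h$ on subsets of $[J]$ is submodular if $h(R\cup\{j\})-h(R)\ge h(S\cup\{j\})-h(S)$ for all $R\subseteq S\subseteq[J]$ and all $j\in[J]\setminus S$. *)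

theory Defs
  imports "HOL-Analysis.Analysis"
begin

text \<open>Vectors in R^J are functions nat => real restricted to {1..J};
  matrices in R^(J x J) are functions nat => nat => real restricted to {1..J} x {1..J}.
  A 0/1 vector y is identified with the subset R = {j. y_j = 1} of {1..J}.\<close>

definition submodular_on :: "nat set \<Rightarrow> (nat set \<Rightarrow> real) \<Rightarrow> bool" where
  "submodular_on V h \<longleftrightarrow>
     (\<forall>R S j. R \<subseteq> S \<and> S \<subseteq> V \<and> j \<in> V - S \<longrightarrow>
        h (R \<union> {j}) - h R \<ge> h (S \<union> {j}) - h S)"

definition sym_psd :: "nat \<Rightarrow> (nat \<Rightarrow> nat \<Rightarrow> real) \<Rightarrow> bool" where
  "sym_psd J L \<longleftrightarrow>
     (\<forall>r\<in>{1..J}. \<forall>s\<in>{1..J}. L r s = L s r) \<and>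
     (\<forall>x :: nat \<Rightarrow> real. (\<Sum>r\<in>{1..J}. \<Sum>s\<in>{1..J}. x r * L r s * x s) \<ge> 0)"

definition gfun :: "(nat \<Rightarrow> real) \<Rightarrow> (nat \<Rightarrow> nat \<Rightarrow> real) \<Rightarrow> nat set \<Rightarrow> real" where
  "gfun mu L R = (\<Sum>j\<in>R. mu j) + sqrt (\<Sum>r\<in>R. \<Sum>s\<in>R. L r s)"

end

theory Submission
  imports Defs
begin

text \<open>Write q(A) for the quadratic form of the indicator vector of A, so that
  g(A) = mu(A) + sqrt (q A). Adding k \<notin> A raises q by the gain
  L k k + 2 \<Sum>a\<in>A. L k a. Nonpositive off-diagonal entries make this gain
  antitone in A, and condition (i) says precisely that it is nonnegative for the
  largest admissible A = [J] - {k}; hence the gain is nonnegative everywhere and q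
  is monotone and nonnegative (so positive semidefiniteness is only needed for
  symmetry). For R \<subseteq> S the increment of g at R then has
  the smaller radicand and the larger gain, and concavity of sqrt finishes.\<close>

lemma sqrt_increment_antimono:
  fixes x y d e :: real
  assumes "0 \<le> x" "x \<le> y" "0 \<le> e" "e \<le> d"
  shows "sqrt (y + e) - sqrt y \<le> sqrt (x + d) - sqrt x"
proof -
  have "(y + e) * x \<le> (x + e) * y"
    using mult_left_mono[OF \<open>x \<le> y\<close> \<open>0 \<le> e\<close>] by (simp add: algebra_simps)
  then have cross: "sqrt (y + e) * sqrt x \<le> sqrt (x + e) * sqrt y"
    by (metis real_sqrt_le_mono real_sqrt_mult)
  have "(sqrt (y + e) + sqrt x)\<^sup>2 \<le> (sqrt (x + e) + sqrt y)\<^sup>2"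
    unfolding power2_sum using cross assms by simp
  then have "sqrt (y + e) + sqrt x \<le> sqrt (x + e) + sqrt y"
    by (rule power2_le_imp_le) (use assms in simp)
  moreover have "sqrt (x + e) \<le> sqrt (x + d)"
    using \<open>e \<le> d\<close> by simp
  ultimately show ?thesis by linarith
qed

definition quad_form :: "(nat \<Rightarrow> nat \<Rightarrow> real) \<Rightarrow> nat set \<Rightarrow> real" where
  "quad_form L A = (\<Sum>r\<in>A. \<Sum>s\<in>A. L r s)"

definition quad_gain :: "(nat \<Rightarrow> nat \<Rightarrow> real) \<Rightarrow> nat set \<Rightarrow> nat \<Rightarrow> real" where
  "quad_gain L A k = L k k + 2 * (\<Sum>a\<in>A. L k a)"

lemma quad_form_insert:
  assumes "finite A" "k \<notin> A" "\<forall>r\<in>A. L r k = L k r"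
  shows "quad_form L (insert k A) = quad_form L A + quad_gain L A k"
proof -
  have "quad_form L (insert k A)
      = (\<Sum>s\<in>insert k A. L k s) + (\<Sum>r\<in>A. L r k + (\<Sum>s\<in>A. L r s))"
    unfolding quad_form_def using assms by simp
  also have "\<dots> = L k k + (\<Sum>s\<in>A. L k s) + (\<Sum>r\<in>A. L k r) + quad_form L A"
    using assms by (simp add: sum.distrib quad_form_def)
  finally show ?thesis
    unfolding quad_gain_def by simp
qed

lemma quad_gain_antimono:
  assumes "A \<subseteq> B" "finite B" "\<forall>s\<in>B - A. L k s \<le> 0"
  shows "quad_gain L B k \<le> quad_gain L A k"
proof -
  have "(\<Sum>s\<in>B. L k s) = (\<Sum>s\<in>A. L k s) + (\<Sum>s\<in>B - A. L k s)"
    using assms by (metis add.commute sum.subset_diff)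
  moreover have "(\<Sum>s\<in>B - A. L k s) \<le> 0"
    using assms(3) by (intro sum_nonpos) simp
  ultimately show ?thesis
    unfolding quad_gain_def by linarith
qed

lemma quad_gain_nonneg:
  fixes J :: nat
  assumes diag: "\<forall>r\<in>{1..J}. 2 * (\<Sum>s\<in>{1..J}. L r s) \<ge> L r r"
    and offdiag: "\<forall>r\<in>{1..J}. \<forall>s\<in>{1..J}. r \<noteq> s \<longrightarrow> L r s \<le> 0"
    and "A \<subseteq> {1..J}" "k \<in> {1..J}" "k \<notin> A"
  shows "0 \<le> quad_gain L A k"
proof -
  let ?B = "{1..J} - {k}"
  have "(\<Sum>s\<in>{1..J}. L k s) = L k k + (\<Sum>s\<in>?B. L k s)"
    using \<open>k \<in> {1..J}\<close> by (simp add: sum.remove)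
  then have "0 \<le> quad_gain L ?B k"
    using diag \<open>k \<in> {1..J}\<close> unfolding quad_gain_def by fastforce
  also have "quad_gain L ?B k \<le> quad_gain L A k"
    by (rule quad_gain_antimono) (use assms in auto)
  finally show ?thesis .
qed

lemma quad_form_mono:
  assumes sym: "\<forall>r\<in>V. \<forall>s\<in>V. L r s = L s r"
    and gain: "\<And>A k. A \<subseteq> V \<Longrightarrow> k \<in> V \<Longrightarrow> k \<notin> A \<Longrightarrow> 0 \<le> quad_gain L A k"
    and "finite V" "A \<subseteq> B" "B \<subseteq> V"
  shows "quad_form L A \<le> quad_form L B"
proof -
  have "A \<subseteq> V" "B - A \<subseteq> V"
    using assms by auto
  then have "finite A" "finite (B - A)"
    using \<open>finite V\<close> finite_subset by blast+
  from \<open>finite (B - A)\<close> \<open>B - A \<subseteq> V\<close>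
  have "quad_form L A \<le> quad_form L (A \<union> (B - A))"
  proof (induction rule: finite_subset_induct')
    case (insert k T)
    show ?case
    proof (cases "k \<in> A")
      case True
      then show ?thesis using insert by (simp add: insert_absorb)
    next
      case False
      have AT: "A \<union> T \<subseteq> V" "finite (A \<union> T)" "k \<notin> A \<union> T"
        using insert False \<open>A \<subseteq> V\<close> \<open>finite A\<close> by auto
      have "quad_form L (insert k (A \<union> T)) = quad_form L (A \<union> T) + quad_gain L (A \<union> T) k"
        by (rule quad_form_insert) (use AT sym insert in auto)
      then show ?thesis
        using insert gain[OF AT(1) \<open>k \<in> V\<close> AT(3)] by simp
    qed
  qed simp
  then show ?thesis
    using \<open>A \<subseteq> B\<close> by (simp add: Un_absorb1)
qed

theorem proposition1:
  fixes J :: nat and mu :: "nat \<Rightarrow> real" and L :: "nat \<Rightarrow> nat \<Rightarrow> real"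
  assumes psd: "sym_psd J L"
    and diag: "\<forall>r\<in>{1..J}. 2 * (\<Sum>s\<in>{1..J}. L r s) \<ge> L r r"
    and offdiag: "\<forall>r\<in>{1..J}. \<forall>s\<in>{1..J}. r \<noteq> s \<longrightarrow> L r s \<le> 0"
  shows "submodular_on {1..J} (gfun mu L)"
  unfolding submodular_on_def
proof (intro allI impI)
  fix R S j assume "R \<subseteq> S \<and> S \<subseteq> {1..J} \<and> j \<in> {1..J} - S"
  then have RS: "R \<subseteq> S" "S \<subseteq> {1..J}" "j \<in> {1..J}" "j \<notin> S"
    by auto
  then have "finite S"
    using finite_subset finite_atLeastAtMost by blast
  have sym: "\<forall>r\<in>{1..J}. \<forall>s\<in>{1..J}. L r s = L s r"
    using psd unfolding sym_psd_def by blast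
  note gain = quad_gain_nonneg[OF diag offdiag]
  note mono = quad_form_mono[OF sym gain finite_atLeastAtMost]
  have increment: "gfun mu L (A \<union> {j}) - gfun mu L A
      = mu j + (sqrt (quad_form L A + quad_gain L A j) - sqrt (quad_form L A))"
    if "A \<subseteq> S" for A
  proof -
    have "finite A"
      using that \<open>finite S\<close> finite_subset by blast
    moreover have "j \<notin> A" "\<forall>r\<in>A. L r j = L j r"
      using that RS sym by blast+
    ultimately show ?thesis
      using quad_form_insert[of A j L] unfolding gfun_def quad_form_def[symmetric] by simp
  qed
  have "sqrt (quad_form L S + quad_gain L S j) - sqrt (quad_form L S)
      \<le> sqrt (quad_form L R + quad_gain L R j) - sqrt (quad_form L R)"
  proof (rule sqrt_increment_antimono)
    show "0 \<le> quad_form L R"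
      using mono[of "{}" R] RS by (simp add: quad_form_def)
    show "quad_form L R \<le> quad_form L S"
      using mono RS by blast
    show "0 \<le> quad_gain L S j"
      using gain RS by blast
    show "quad_gain L S j \<le> quad_gain L R j"
    proof (rule quad_gain_antimono)
      show "\<forall>s\<in>S - R. L j s \<le> 0"
        using RS offdiag by (metis DiffD1 subsetD)
    qed (use RS \<open>finite S\<close> in auto)
  qed
  then show "gfun mu L (S \<union> {j}) - gfun mu L S \<le> gfun mu L (R \<union> {j}) - gfun mu L R"
    using increment[of R] increment[of S] RS by simp
qed

end
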